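(* Let $\alpha_1,\alpha_2,\alpha_3,\alpha_4\in\mathcal{O}^\times$. Then $$\min\{v(\alpha_1+\alpha_2-\alpha_3-\alpha_4),\,v(\alpha_1^{-1}+\alpha_2^{-1}-\alpha_3^{-1}-\alpha_4^{-1})\}\le v(\alpha_1^l+\alpha_2^l-\alpha_3^l-\alpha_4^l)$$ for all odd integers $l$. If additionally $\alpha_1+\alpha_2\in\mathcal{O}^\times$, then this holds for all integers $l$.
   Context: $F$ is a non-archimedean local field of characteristic $0$ and odd residue characteristic, $\mathcal{O}$ its ring of integers, $v$ its normalised valuation with $v(0)=\infty$. *)

theory Defs
  imports Complex_Main "HOL-Library.Extended_Real"
begin

definition normalised_discrete_valuation :: "('a::field \<Rightarrow> ereal) \<Rightarrow> bool" where
  "normalised_discrete_valuation v \<longleftrightarrow>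
     v 0 = \<infinity> \<and>
     (\<forall>x. x \<noteq> 0 \<longrightarrow> (\<exists>n::int. v x = ereal (of_int n))) \<and>
     (\<forall>x y. v (x * y) = v x + v y) \<and>
     (\<forall>x y. min (v x) (v y) \<le> v (x + y)) \<and>
     (\<forall>n::int. \<exists>x. v x = ereal (of_int n))"

definition val_complete :: "('a::field \<Rightarrow> ereal) \<Rightarrow> bool" where
  "val_complete v \<longleftrightarrow>
     (\<forall>s::nat \<Rightarrow> 'a.
        (\<forall>N::int. \<exists>M. \<forall>m\<ge>M. \<forall>n\<ge>M. ereal (of_int N) \<le> v (s m - s n)) \<longrightarrow>
        (\<exists>L. \<forall>N::int. \<exists>M. \<forall>n\<ge>M. ereal (of_int N) \<le> v (s n - L)))"

definition val_ring :: "('a::field \<Rightarrow> ereal) \<Rightarrow> 'a set" where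
  "val_ring v = {x. 0 \<le> v x}"

definition val_units :: "('a::field \<Rightarrow> ereal) \<Rightarrow> 'a set" where
  "val_units v = {x. v x = 0}"

definition residue_field :: "('a::field \<Rightarrow> ereal) \<Rightarrow> 'a set set" where
  "residue_field v = val_ring v // {(x, y). x \<in> val_ring v \<and> y \<in> val_ring v \<and> 0 < v (x - y)}"

definition nonarch_local_field :: "('a::field \<Rightarrow> ereal) \<Rightarrow> bool" where
  "nonarch_local_field v \<longleftrightarrow>
     normalised_discrete_valuation v \<and> val_complete v \<and> finite (residue_field v)"

text \<open>Odd residue characteristic: 2 is nonzero in the residue field, i.e. 2 is not in
  the maximal ideal.\<close>
definition odd_residue_char :: "('a::field \<Rightarrow> ereal) \<Rightarrow> bool" where
  "odd_residue_char v \<longleftrightarrow> \<not> (0 < v 2)"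

end

theory Submission
  imports Defs
begin

text \<open>Write s = a + b, p = a b, s' = c + d, p' = c d, and x \<equiv> y (\<open>vcong m x y\<close> below) for
  v (x - y) \<ge> m on the valuation ring. The hypotheses say s \<equiv> s' and, after clearing the unit
  denominator a b c d, s' p \<equiv> s p'. If s is a unit this gives p \<equiv> p', and the recurrence
  P(k+2) = s P(k+1) - p P(k) for the power sums P(k) = a^k + b^k yields P(k) \<equiv> P'(k).
  In general only s p^j \<equiv> s' p'^j holds, but this suffices for odd exponents: by the recurrence
  P(k+4) = (s^2 - 2p) P(k+2) - p^2 P(k) one gets p^j P(2n+1) \<equiv> p'^j P'(2n+1) for all j.
  Negative exponents reduce to positive ones by passing to the inverses, which swaps the two
  hypotheses.\<close>

lemma power_sum_Suc_Suc:
  fixes a b :: "'a::comm_ring_1"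
  shows "a ^ Suc (Suc k) + b ^ Suc (Suc k) = (a + b) * (a ^ Suc k + b ^ Suc k) - a * b * (a ^ k + b ^ k)"
  by (simp add: algebra_simps)

lemma power_sum_add_4:
  fixes a b :: "'a::comm_ring_1"
  shows "a ^ (k + 4) + b ^ (k + 4)
    = ((a + b) ^ 2 - 2 * (a * b)) * (a ^ (k + 2) + b ^ (k + 2)) - (a * b) ^ 2 * (a ^ k + b ^ k)"
  by (simp add: algebra_simps power2_eq_square power_add numeral_eq_Suc)

locale field_valuation =
  fixes v :: "'a::field \<Rightarrow> ereal"
  assumes v_eq_infinity_iff: "v x = \<infinity> \<longleftrightarrow> x = 0"
    and v_not_minf: "v x \<noteq> -\<infinity>"
    and v_mult: "v (x * y) = v x + v y"
    and v_add_ge_min: "min (v x) (v y) \<le> v (x + y)"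

lemma normalised_discrete_valuation_imp_field_valuation:
  assumes "normalised_discrete_valuation v"
  shows "field_valuation v"
proof
  fix x y
  have fin: "x \<noteq> 0 \<Longrightarrow> \<exists>n::int. v x = ereal (of_int n)" and v0: "v 0 = \<infinity>"
    using assms unfolding normalised_discrete_valuation_def by blast+
  show "v x = \<infinity> \<longleftrightarrow> x = 0" "v x \<noteq> -\<infinity>"
    using fin v0 by (cases "x = 0"; force)+
  show "v (x * y) = v x + v y" "min (v x) (v y) \<le> v (x + y)"
    using assms unfolding normalised_discrete_valuation_def by blast+
qed

context field_valuation
begin

lemma v_zero [simp]: "v 0 = \<infinity>"
  using v_eq_infinity_iff by simp

lemma v_one [simp]: "v 1 = 0"
proof -
  have "v 1 = v 1 + v 1"
    using v_mult[of 1 1] by simp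
  moreover have "\<bar>v 1\<bar> \<noteq> \<infinity>"
    using v_eq_infinity_iff[of 1] v_not_minf[of 1] by auto
  ultimately show ?thesis
    by (cases "v 1") auto
qed

lemma v_minus [simp]: "v (- x) = v x"
proof -
  have "v (-1) + v (-1) = 0"
    using v_mult[of "-1" "-1"] by simp
  moreover have "\<bar>v (-1)\<bar> \<noteq> \<infinity>"
    using v_eq_infinity_iff[of "-1"] v_not_minf[of "-1"] by auto
  ultimately have "v (-1) = 0"
    by (cases "v (-1)") auto
  then show ?thesis
    using v_mult[of "-1" x] by simp
qed

lemma v_unit_nonzero: "v x = 0 \<Longrightarrow> x \<noteq> 0"
  by auto

lemma v_mult_unit: "v u = 0 \<Longrightarrow> v (u * x) = v x"
  by (simp add: v_mult)

lemma v_inverse_unit: "v x = 0 \<Longrightarrow> v (inverse x) = 0"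
  using v_mult[of x "inverse x"] by (cases "x = 0") auto

lemma v_add_ge: "m \<le> v x \<Longrightarrow> m \<le> v y \<Longrightarrow> m \<le> v (x + y)"
  using v_add_ge_min[of x y] by (meson min.boundedI order_trans)

lemma v_diff_ge: "m \<le> v x \<Longrightarrow> m \<le> v y \<Longrightarrow> m \<le> v (x - y)"
  using v_add_ge[of m x "- y"] by simp

lemma v_mult_ge: "0 \<le> v r \<Longrightarrow> m \<le> v x \<Longrightarrow> m \<le> v (r * x)"
  using add_mono[of 0 "v r" m "v x"] by (simp add: v_mult)

lemma v_of_nat_nonneg: "0 \<le> v (of_nat n)"
  by (induction n) (auto intro: v_add_ge)

lemma v_power_nonneg: "0 \<le> v x \<Longrightarrow> 0 \<le> v (x ^ n)"
  by (induction n) (auto intro: v_mult_ge)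

definition vcong :: "ereal \<Rightarrow> 'a \<Rightarrow> 'a \<Rightarrow> bool" where
  "vcong m x y \<longleftrightarrow> 0 \<le> v x \<and> 0 \<le> v y \<and> m \<le> v (x - y)"

lemma vcong_refl: "0 \<le> v x \<Longrightarrow> vcong m x x"
  by (simp add: vcong_def)

lemma vcong_numeral: "vcong m (numeral n) (numeral n)"
  using vcong_refl v_of_nat_nonneg[of "numeral n"] by simp

lemma vcong_sym: "vcong m x y \<Longrightarrow> vcong m y x"
  using v_minus[of "x - y"] by (simp add: vcong_def)

lemma vcong_trans [trans]: "vcong m x y \<Longrightarrow> vcong m y z \<Longrightarrow> vcong m x z"
  using v_add_ge[of m "x - y" "y - z"] by (simp add: vcong_def)

lemma vcong_diff: "vcong m x y \<Longrightarrow> vcong m x' y' \<Longrightarrow> vcong m (x - x') (y - y')"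
  using v_diff_ge[of m "x - y" "x' - y'"] v_diff_ge[of 0]
  by (simp add: vcong_def algebra_simps)

lemma vcong_mult: "vcong m x y \<Longrightarrow> vcong m x' y' \<Longrightarrow> vcong m (x * x') (y * y')"
proof -
  assume "vcong m x y" "vcong m x' y'"
  then have "m \<le> v (x * (x' - y') + (x - y) * y')" "0 \<le> v (x * x')" "0 \<le> v (y * y')"
    unfolding vcong_def
    by (auto intro!: v_add_ge v_mult_ge simp: mult.commute[of "x - y"])
  then show ?thesis
    by (simp add: vcong_def algebra_simps)
qed

lemma vcong_power: "vcong m x y \<Longrightarrow> vcong m (x ^ n) (y ^ n)"
  by (induction n) (auto intro: vcong_mult vcong_refl)

lemma vcong_cancel_unit:
  assumes "v u = 0" "0 \<le> v x" "0 \<le> v y" "vcong m (u * x) (u * y)"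
  shows "vcong m x y"
  using assms v_mult_unit[of u "x - y"] by (simp add: vcong_def right_diff_distrib)

lemma vcong_power_sums:
  assumes "vcong m (a + b) (c + d)" "vcong m (a * b) (c * d)"
  shows "vcong m (a ^ k + b ^ k) (c ^ k + d ^ k)"
proof (induction k rule: induct_nat_012)
  case 0
  show ?case using vcong_numeral[of m "num.One + num.One"] by simp
next
  case 1
  show ?case using assms(1) by simp
next
  case (ge2 k)
  then show ?case
    unfolding power_sum_Suc_Suc by (intro vcong_diff vcong_mult assms)
qed

lemma vcong_product_if_sum_unit:
  assumes "vcong m s s'" "vcong m (s' * p) (s * p')" "v s = 0" "0 \<le> v p" "0 \<le> v p'"
  shows "vcong m p p'"
proof (rule vcong_cancel_unit[OF \<open>v s = 0\<close> \<open>0 \<le> v p\<close> \<open>0 \<le> v p'\<close>])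
  have "vcong m (s * p) (s' * p)"
    using assms(1,4) by (intro vcong_mult vcong_refl)
  also have "vcong m (s' * p) (s * p')"
    by fact
  finally show "vcong m (s * p) (s * p')" .
qed

lemma vcong_times_power:
  assumes "vcong m s s'" "vcong m (s' * p) (s * p')" "0 \<le> v p" "0 \<le> v p'"
  shows "vcong m (s * p ^ j) (s' * p' ^ j)"
proof (induction j)
  case 0
  show ?case using assms(1) by simp
next
  case (Suc j)
  have "vcong m (s * p ^ Suc j) (s' * p ^ Suc j)"
    using vcong_mult[OF assms(1) vcong_refl[OF v_power_nonneg[OF assms(3)]]] .
  also have "s' * p ^ Suc j = p ^ j * (s' * p)"
    by (simp add: algebra_simps)
  also have "vcong m \<dots> (p ^ j * (s * p'))"
    using vcong_mult[OF vcong_refl[OF v_power_nonneg[OF assms(3)]] assms(2)] .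
  also have "p ^ j * (s * p') = p' * (s * p ^ j)"
    by (simp add: algebra_simps)
  also have "vcong m \<dots> (p' * (s' * p' ^ j))"
    using vcong_mult[OF vcong_refl[OF assms(4)] Suc.IH] .
  also have "p' * (s' * p' ^ j) = s' * p' ^ Suc j"
    by (simp add: algebra_simps)
  finally show ?case .
qed

lemma vcong_odd_power_sums:
  assumes s: "vcong m (a + b) (c + d)" and sp: "vcong m ((c + d) * (a * b)) ((a + b) * (c * d))"
    and "0 \<le> v (a * b)" "0 \<le> v (c * d)"
  shows "vcong m (a ^ (2 * n + 1) + b ^ (2 * n + 1)) (c ^ (2 * n + 1) + d ^ (2 * n + 1))"
proof -
  let ?P = "\<lambda>j n. (a * b) ^ j * (a ^ (2 * n + 1) + b ^ (2 * n + 1))"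
  let ?Q = "\<lambda>j n. (c * d) ^ j * (c ^ (2 * n + 1) + d ^ (2 * n + 1))"
  have sum_times_power: "vcong m ((a + b) * (a * b) ^ j) ((c + d) * (c * d) ^ j)" for j
    using vcong_times_power[OF s sp assms(3,4)] .
  have "vcong m (?P j n) (?Q j n)" for j
  proof (induction n arbitrary: j rule: induct_nat_012)
    case 0
    show ?case using sum_times_power[of j] by (simp add: mult.commute)
  next
    case 1
    have eq: "?P j (Suc 0) = (a + b) ^ 2 * ((a + b) * (a * b) ^ j) - 3 * ((a + b) * (a * b) ^ Suc j)"
      "?Q j (Suc 0) = (c + d) ^ 2 * ((c + d) * (c * d) ^ j) - 3 * ((c + d) * (c * d) ^ Suc j)"
      by (simp_all add: algebra_simps power2_eq_square)
    show ?case
      unfolding eq by (rule vcong_diff[OF vcong_mult[OF vcong_power[OF s] sum_times_power]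
          vcong_mult[OF vcong_numeral sum_times_power]])
  next
    case (ge2 n)
    have step: "(x * y) ^ j * (x ^ (2 * Suc (Suc n) + 1) + y ^ (2 * Suc (Suc n) + 1))
      = (x + y) ^ 2 * ((x * y) ^ j * (x ^ (2 * Suc n + 1) + y ^ (2 * Suc n + 1)))
        - 2 * ((x * y) ^ Suc j * (x ^ (2 * Suc n + 1) + y ^ (2 * Suc n + 1)))
        - (x * y) ^ (j + 2) * (x ^ (2 * n + 1) + y ^ (2 * n + 1))" for x y :: 'a
      using arg_cong[OF power_sum_add_4[of x "2 * n + 1" y], of "\<lambda>z. (x * y) ^ j * z"]
      by (simp add: algebra_simps power_add power2_eq_square)
    show ?case
      unfolding step
      using vcong_diff[OF vcong_diff[OF vcong_mult[OF vcong_power[OF s] ge2(2)]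
            vcong_mult[OF vcong_numeral ge2(2)]] ge2(1)] .
  qed
  from this[of 0] show ?thesis
    by simp
qed

lemma v_inverse_sum_diff:
  assumes "v a = 0" "v b = 0" "v c = 0" "v d = 0"
  shows "v (inverse a + inverse b - inverse c - inverse d) = v ((a + b) * (c * d) - (c + d) * (a * b))"
proof -
  have "a \<noteq> 0" "b \<noteq> 0" "c \<noteq> 0" "d \<noteq> 0"
    using assms by (simp_all add: v_unit_nonzero)
  then have "inverse a + inverse b - inverse c - inverse d
      = inverse (a * b * c * d) * ((a + b) * (c * d) - (c + d) * (a * b))"
    by (simp add: field_simps)
  moreover have "v (inverse (a * b * c * d)) = 0"
    using assms by (simp add: v_mult v_inverse_unit)
  ultimately show ?thesis
    by (simp add: v_mult_unit)
qed

lemma power_sums_congruent: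
  assumes units: "v a = 0" "v b = 0" "v c = 0" "v d = 0"
    and sum: "m \<le> v (a + b - c - d)"
    and inverse_sum: "m \<le> v (inverse a + inverse b - inverse c - inverse d)"
    and "v (a + b) = 0 \<or> odd k"
  shows "m \<le> v (a ^ k + b ^ k - c ^ k - d ^ k)"
proof -
  have integral: "0 \<le> v (a + b)" "0 \<le> v (c + d)" "0 \<le> v (a * b)" "0 \<le> v (c * d)"
    using units by (simp_all add: v_add_ge v_mult)
  have s: "vcong m (a + b) (c + d)"
    using sum integral by (simp add: vcong_def diff_diff_eq)
  have "vcong m ((a + b) * (c * d)) ((c + d) * (a * b))"
    using inverse_sum integral v_inverse_sum_diff[OF units] by (simp add: vcong_def v_mult)
  then have sp: "vcong m ((c + d) * (a * b)) ((a + b) * (c * d))"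
    by (rule vcong_sym)
  have "vcong m (a ^ k + b ^ k) (c ^ k + d ^ k)"
    using \<open>v (a + b) = 0 \<or> odd k\<close>
  proof
    assume "v (a + b) = 0"
    then have "vcong m (a * b) (c * d)"
      using vcong_product_if_sum_unit[OF s sp _ integral(3,4)] by simp
    then show ?thesis
      by (rule vcong_power_sums[OF s])
  next
    assume "odd k"
    then obtain n where "k = 2 * n + 1"
      by (rule oddE)
    then show ?thesis
      using vcong_odd_power_sums[OF s sp integral(3,4)] by simp
  qed
  then show ?thesis
    by (simp add: vcong_def diff_diff_eq)
qed

lemma power_int_sums_congruent:
  assumes units: "v a = 0" "v b = 0" "v c = 0" "v d = 0"
    and sum: "m \<le> v (a + b - c - d)"
    and inverse_sum: "m \<le> v (inverse a + inverse b - inverse c - inverse d)"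
    and "v (a + b) = 0 \<or> odd l"
  shows "m \<le> v (a powi l + b powi l - c powi l - d powi l)"
proof (cases "0 \<le> l")
  case True
  then obtain k where "l = int k"
    using nonneg_int_cases by blast
  then show ?thesis
    using power_sums_congruent[OF units sum inverse_sum, of k] assms(7) by simp
next
  case False
  define k where "k = nat (- l)"
  have l: "l = - int k"
    using False by (simp add: k_def)
  have "inverse a + inverse b = inverse (a * b) * (a + b)"
    using units by (simp add: v_unit_nonzero field_simps)
  then have "v (inverse a + inverse b) = 0 \<or> odd k"
    using assms(7) units l by (auto simp: v_mult v_inverse_unit)
  from power_sums_congruent[OF units[THEN v_inverse_unit] inverse_sum _ this] sum
  show ?thesis
    unfolding l by (simp add: power_int_minus power_inverse)
qed

end

theorem lemma12p2:
  fixes v :: "'a::field_char_0 \<Rightarrow> ereal"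
    and \<alpha>1 \<alpha>2 \<alpha>3 \<alpha>4 :: 'a
  assumes "nonarch_local_field v"
    and "odd_residue_char v"
    and "\<alpha>1 \<in> val_units v" "\<alpha>2 \<in> val_units v" "\<alpha>3 \<in> val_units v" "\<alpha>4 \<in> val_units v"
  shows "(\<forall>l::int. odd l \<longrightarrow>
            min (v (\<alpha>1 + \<alpha>2 - \<alpha>3 - \<alpha>4))
                (v (inverse \<alpha>1 + inverse \<alpha>2 - inverse \<alpha>3 - inverse \<alpha>4))
            \<le> v (\<alpha>1 powi l + \<alpha>2 powi l - \<alpha>3 powi l - \<alpha>4 powi l))
       \<and> (\<alpha>1 + \<alpha>2 \<in> val_units v \<longrightarrow>
          (\<forall>l::int.
            min (v (\<alpha>1 + \<alpha>2 - \<alpha>3 - \<alpha>4))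
                (v (inverse \<alpha>1 + inverse \<alpha>2 - inverse \<alpha>3 - inverse \<alpha>4))
            \<le> v (\<alpha>1 powi l + \<alpha>2 powi l - \<alpha>3 powi l - \<alpha>4 powi l)))"
proof -
  interpret field_valuation v
    using assms(1) normalised_discrete_valuation_imp_field_valuation
    unfolding nonarch_local_field_def by blast
  have units: "v \<alpha>1 = 0" "v \<alpha>2 = 0" "v \<alpha>3 = 0" "v \<alpha>4 = 0"
    using assms(3-6) unfolding val_units_def by simp_all
  have "min (v (\<alpha>1 + \<alpha>2 - \<alpha>3 - \<alpha>4))
            (v (inverse \<alpha>1 + inverse \<alpha>2 - inverse \<alpha>3 - inverse \<alpha>4))
        \<le> v (\<alpha>1 powi l + \<alpha>2 powi l - \<alpha>3 powi l - \<alpha>4 powi l)"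
    if "v (\<alpha>1 + \<alpha>2) = 0 \<or> odd l" for l
    using power_int_sums_congruent[OF units min.cobounded1 min.cobounded2 that] .
  then show ?thesis
    unfolding val_units_def by blast
qed

end
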